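(* Let $(u_1,v_1)$ and $(u_2,v_2)$ be two decompositions of the $\omega$-word $uv^\omega$. If $(u_1,v_1)$ and $(u_2,v_2)$ have the same smallest period $y$, then they have the same shortest form $(x,y)$, with $u_1=xy^i$ and $u_2=xy^j$ for some $i,j\geq0$.
   Context: A decomposition of an $\omega$-word $w$ is a pair $(u,v)$ with $u\in\Sigma^*$, $v\in\Sigma^+$ and $w=uv^\omega$. Write $r\unlhd v$ if $r$ is a nonempty prefix of $v$, and $r\lhd v$ if moreover $r\neq v$. A smallest period of $(u,v)$ is a word $r$ with $r\unlhd v$, $r^\omega=v^\omega$, and $t^\omega\neq r^\omega$ for every $t\lhd r$. If $y$ is the smallest period of $(u,v)$, the shortest form of $(u,v)$ is the pair $(x,y)$ where $u=xy^i$, $v=y^j$ for some $i\geq0,j\geq1$ and $x$ is such that every $x'$ with $u=x'y^k$ ($0\le k\le i$) satisfies $x'=xy^{i-k}$ (i.e., $x$ is the shortest word with $u\in xy^*$). *)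

theory Defs
  imports Main
begin

(* finite words: lists; omega-words: functions nat => 'a *)

definition wpow :: "'a list \<Rightarrow> nat \<Rightarrow> 'a list" where
  "wpow y i = concat (replicate i y)"

(* the omega-word u v^omega (meaningful for v \<noteq> []) *)
definition omega :: "'a list \<Rightarrow> 'a list \<Rightarrow> nat \<Rightarrow> 'a" where
  "omega u v = (\<lambda>n. if n < length u then u ! n else v ! ((n - length u) mod length v))"

definition decomposition :: "(nat \<Rightarrow> 'a) \<Rightarrow> 'a list \<Rightarrow> 'a list \<Rightarrow> bool" where
  "decomposition w u v \<longleftrightarrow> v \<noteq> [] \<and> w = omega u v"

definition npref :: "'a list \<Rightarrow> 'a list \<Rightarrow> bool" where
  "npref r v \<longleftrightarrow> r \<noteq> [] \<and> (\<exists>z. v = r @ z)"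

definition nspref :: "'a list \<Rightarrow> 'a list \<Rightarrow> bool" where
  "nspref r v \<longleftrightarrow> npref r v \<and> r \<noteq> v"

definition smallest_period :: "'a list \<Rightarrow> 'a list \<Rightarrow> 'a list \<Rightarrow> bool" where
  "smallest_period u v r \<longleftrightarrow>
     npref r v \<and> omega [] r = omega [] v \<and> (\<forall>t. nspref t r \<longrightarrow> omega [] t \<noteq> omega [] r)"

definition shortest_form :: "'a list \<Rightarrow> 'a list \<Rightarrow> 'a list \<Rightarrow> 'a list \<Rightarrow> bool" where
  "shortest_form u v x y \<longleftrightarrow>
     smallest_period u v y \<and>
     (\<exists>i j. j \<ge> 1 \<and> u = x @ wpow y i \<and> v = wpow y j) \<and>
     (\<forall>x' k. u = x' @ wpow y k \<longrightarrow> length x \<le> length x')"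

end

theory Submission
  imports Defs
begin

(* A smallest period y of some v is primitive: every period of y^omega is a multiple of |y|,
   since otherwise p mod |y| would be a smaller period and take (p mod |y|) y a shorter root.
   Hence v is a power of y, and if x1 y^omega = x2 y^omega with |x1| <= |x2|, the factor of x2
   beyond x1 is a period of y^omega, so x2 = x1 y^m.  Stripping all trailing copies of y from
   u1 and u2 therefore leaves the same word x, because both decompositions describe x y^omega. *)

definition primitive :: "'a list \<Rightarrow> bool" where
  "primitive y \<longleftrightarrow> y \<noteq> [] \<and> (\<forall>t. nspref t y \<longrightarrow> omega [] t \<noteq> omega [] y)"

definition shortest_prefix :: "'a list \<Rightarrow> 'a list \<Rightarrow> 'a list \<Rightarrow> bool" where
  "shortest_prefix y u x \<longleftrightarrow>
     (\<exists>i. u = x @ wpow y i) \<and> (\<forall>x' k. u = x' @ wpow y k \<longrightarrow> length x \<le> length x')"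

lemma omega_Nil: "omega [] v n = v ! (n mod length v)"
  by (simp add: omega_def)

lemma omega_shift: "omega x y (length x + n) = omega [] y n"
  by (simp add: omega_def)

lemma omega_cong_period: "omega [] v = omega [] y \<Longrightarrow> omega u v = omega u y"
  by (auto simp: fun_eq_iff omega_def)

lemma length_wpow: "length (wpow y i) = i * length y"
  by (induct i) (auto simp: wpow_def)

lemma wpow_add: "wpow y (i + j) = wpow y i @ wpow y j"
  by (simp add: wpow_def replicate_add)

lemma omega_append_period:
  assumes "y \<noteq> []" shows "omega (x @ y) y = omega x y"
proof
  fix n
  show "omega (x @ y) y n = omega x y n"
  proof (cases "n < length x + length y")
    case False
    then have "n - length x = (n - length x - length y) + length y" by simp
    then have "(n - length x) mod length y = (n - length x - length y) mod length y"
      by (metis mod_add_self2)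
    with False show ?thesis by (auto simp: omega_def nth_append)
  qed (auto simp: omega_def nth_append)
qed

lemma omega_append_wpow:
  assumes "y \<noteq> []" shows "omega (x @ wpow y i) y = omega x y"
proof (induct i arbitrary: x)
  case (Suc i)
  have "omega (x @ wpow y (Suc i)) y = omega ((x @ y) @ wpow y i) y"
    by (simp add: wpow_def)
  also have "\<dots> = omega (x @ y) y" by (rule Suc)
  also have "\<dots> = omega x y" by (rule omega_append_period[OF assms])
  finally show ?case .
qed (simp add: wpow_def)

lemma eq_wpowI:
  assumes "y \<noteq> []" "length s = m * length y" "\<And>k. k < length s \<Longrightarrow> s ! k = omega [] y k"
  shows "s = wpow y m"
proof (rule nth_equalityI)
  show "length s = length (wpow y m)" using assms(2) by (simp add: length_wpow)
next
  fix k assume k: "k < length s"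
  have "wpow y m ! k = omega (wpow y m) y k"
    using k assms(2) by (simp add: omega_def length_wpow)
  also have "\<dots> = omega [] y k" using omega_append_wpow[OF assms(1), of "[]" m] by simp
  finally show "s ! k = wpow y m ! k" using assms(3)[OF k] by simp
qed

lemma periodic_add_mult:
  fixes W :: "nat \<Rightarrow> 'a"
  assumes "\<And>n. W (n + r) = W n" shows "W (n + r * k) = W n"
proof (induct k)
  case (Suc k)
  have "W (n + r * Suc k) = W ((n + r * k) + r)" by (simp add: algebra_simps)
  then show ?case using assms Suc by simp
qed simp

lemma primitive_period_dvd:
  assumes prim: "primitive y" and per: "\<And>n. omega [] y (n + p) = omega [] y n"
  shows "length y dvd p"
proof (rule ccontr)
  assume "\<not> length y dvd p"
  define W where "W = omega [] y"
  define r where "r = p mod length y"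
  have y: "y \<noteq> []" using prim by (simp add: primitive_def)
  have r: "0 < r" "r < length y"
    using \<open>\<not> length y dvd p\<close> y by (auto simp: r_def dvd_eq_mod_eq_0)
  have per_r: "W (n + r) = W n" for n
  proof -
    have "W (n + r) = W (n + r + length y * (p div length y))"
      by (simp add: W_def omega_Nil)
    also have "n + r + length y * (p div length y) = n + p" by (simp add: r_def)
    also have "W (n + p) = W n" using per by (simp add: W_def)
    finally show ?thesis .
  qed
  define t where "t = take r y"
  have "length t = r" using r by (simp add: t_def)
  then have "nspref t y"
    using r unfolding nspref_def npref_def t_def by (auto intro: append_take_drop_id[symmetric])
  moreover have "omega [] t = W"
  proof
    fix n
    have "n mod r < length y" using r by (meson mod_less_divisor less_trans)
    then have "omega [] t n = W (n mod r)"
      using r by (simp add: omega_Nil t_def W_def)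
    also have "\<dots> = W (n mod r + r * (n div r))"
      using periodic_add_mult[of W r, OF per_r] by (rule sym)
    finally show "omega [] t n = W n" by simp
  qed
  ultimately show False using prim by (simp add: primitive_def W_def)
qed

lemma smallest_period_primitive: "smallest_period u v y \<Longrightarrow> primitive y"
  by (auto simp: smallest_period_def primitive_def npref_def)

lemma smallest_period_wpow:
  assumes sp: "smallest_period u v y" shows "\<exists>j\<ge>1. v = wpow y j"
proof -
  have prim: "primitive y" and y: "y \<noteq> []"
    using smallest_period_primitive[OF sp] by (auto simp: primitive_def)
  have v: "v \<noteq> []" and eq: "omega [] y = omega [] v"
    using sp by (auto simp: smallest_period_def npref_def)
  have "omega [] y (n + length v) = omega [] y n" for n
    using v by (simp add: eq omega_Nil)
  then obtain j where j: "length v = j * length y"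
    using primitive_period_dvd[OF prim] by (metis dvd_def mult.commute)
  moreover have "v = wpow y j"
    using j by (rule eq_wpowI[OF y]) (simp add: eq omega_Nil)
  moreover have "j \<ge> 1" using j v by (cases j) auto
  ultimately show ?thesis by blast
qed

lemma shortest_form_iff_shortest_prefix:
  "smallest_period u v y \<Longrightarrow> shortest_form u v x y \<longleftrightarrow> shortest_prefix y u x"
  using smallest_period_wpow unfolding shortest_form_def shortest_prefix_def by blast

lemma shortest_prefix_exists: "\<exists>x. shortest_prefix y u x"
proof -
  have "\<exists>k. u = u @ wpow y k" by (auto simp: wpow_def intro: exI[of _ 0])
  then obtain x where "\<exists>k. u = x @ wpow y k"
    and "\<And>x'. (\<exists>k. u = x' @ wpow y k) \<Longrightarrow> length x \<le> length x'"
    using ex_has_least_nat[of "\<lambda>x. \<exists>k. u = x @ wpow y k" u length] by blast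
  then show ?thesis unfolding shortest_prefix_def by blast
qed

lemma omega_eq_imp_append_wpow:
  assumes prim: "primitive y" and eq: "omega x1 y = omega x2 y"
    and le: "length x1 \<le> length x2"
  shows "\<exists>m. x2 = x1 @ wpow y m"
proof -
  have y: "y \<noteq> []" using prim by (simp add: primitive_def)
  have "take (length x1) x2 = x1"
  proof (rule nth_equalityI)
    fix n assume "n < length (take (length x1) x2)"
    then show "take (length x1) x2 ! n = x1 ! n"
      using fun_cong[OF eq, of n] by (simp add: omega_def)
  qed (use le in simp)
  then obtain z where x2: "x2 = x1 @ z" by (metis append_take_drop_id)
  have z_period: "omega [] y (n + length z) = omega [] y n" for n
  proof -
    have "omega [] y (n + length z) = omega x1 y (length x1 + (n + length z))"
      by (rule omega_shift[symmetric])
    also have "\<dots> = omega x2 y (length x2 + n)" by (simp add: eq x2 algebra_simps)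
    also have "\<dots> = omega [] y n" by (rule omega_shift)
    finally show ?thesis .
  qed
  obtain m where "length z = m * length y"
    using primitive_period_dvd[OF prim z_period] by (metis dvd_def mult.commute)
  then have "z = wpow y m"
  proof (rule eq_wpowI[OF y])
    fix k assume "k < length z"
    then show "z ! k = omega [] y k"
      using omega_shift[of x1 y k] fun_cong[OF eq, of "length x1 + k"] x2
      by (simp add: omega_def nth_append)
  qed
  with x2 show ?thesis by blast
qed

lemma shortest_prefix_unique:
  assumes prim: "primitive y"
    and sp1: "shortest_prefix y u1 x1" and sp2: "shortest_prefix y u2 x2"
    and eq: "omega u1 y = omega u2 y"
  shows "x1 = x2"
proof -
  have y: "y \<noteq> []" using prim by (simp add: primitive_def)
  have eq_x: "omega x1 y = omega x2 y"
    using sp1 sp2 eq by (auto simp: shortest_prefix_def omega_append_wpow[OF y])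
  have "x2 = x1" if sp2: "shortest_prefix y u2 x2" and eq_x: "omega x1 y = omega x2 y"
      and le: "length x1 \<le> length x2" for x1 x2 u2
  proof -
    obtain m where x2: "x2 = x1 @ wpow y m"
      using omega_eq_imp_append_wpow[OF prim eq_x le] by blast
    obtain i where "u2 = x2 @ wpow y i" using sp2 by (auto simp: shortest_prefix_def)
    then have "u2 = x1 @ wpow y (m + i)" by (simp add: x2 wpow_add)
    then have "length x2 \<le> length x1" using sp2 by (auto simp: shortest_prefix_def)
    then show ?thesis using x2 by simp
  qed
  from this[OF sp2 eq_x] this[OF sp1 eq_x[symmetric]] show ?thesis
    by (cases "length x1 \<le> length x2") auto
qed

theorem corollary1:
  fixes u v u1 v1 u2 v2 y :: "'a list"
  assumes "v \<noteq> []"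
    and "decomposition (omega u v) u1 v1"
    and "decomposition (omega u v) u2 v2"
    and "smallest_period u1 v1 y"
    and "smallest_period u2 v2 y"
  shows "\<exists>x i j. shortest_form u1 v1 x y \<and> shortest_form u2 v2 x y \<and>
           u1 = x @ wpow y i \<and> u2 = x @ wpow y j"
proof -
  obtain x1 where x1: "shortest_prefix y u1 x1" using shortest_prefix_exists by blast
  obtain x2 where x2: "shortest_prefix y u2 x2" using shortest_prefix_exists by blast
  have "omega u1 y = omega u1 v1" "omega u2 y = omega u2 v2"
    using assms(4,5) by (auto simp: smallest_period_def intro: omega_cong_period)
  then have "omega u1 y = omega u2 y"
    using assms(2,3) by (simp add: decomposition_def)
  then have "x1 = x2"
    using shortest_prefix_unique[OF smallest_period_primitive[OF assms(4)] x1 x2] by blast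
  then show ?thesis
    using x1 x2 assms(4,5)
    by (auto simp: shortest_form_iff_shortest_prefix shortest_prefix_def)
qed

end
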